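(* Let $p,q,e$ be positive integers. If $n>1$ is the length of a cycle of the Cat map over $\mathbb{Z}_{2^e}$, then $H_n$ is even.
   Context: $\mathbf{C}=\begin{bmatrix}1 & p\\ q & 1+pq\end{bmatrix}$; the Cat map over $\mathbb{Z}_{2^e}$ is the bijection $v\mapsto\mathbf{C}v\bmod 2^e$ of $\mathbb{Z}_{2^e}^2$, and a cycle of length $n$ is the orbit of a point $v$ for which $n$ is the least positive integer with $\mathbf{C}^nv\equiv v\pmod{2^e}$. $A=pq+2$, $B=\sqrt{A^2-4}$, $H_n=\frac{1}{B}\left(\left(\frac{A+B}{2}\right)^n-\left(\frac{A-B}{2}\right)^n\right)$ (an integer). *)

theory Defs
  imports Complex_Main
begin

text \<open>The Cat map over Z_(2^e): v = (x,y) is mapped to C v mod 2^e with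
  C = [[1, p], [q, 1 + p q]]. Points of Z_(2^e)^2 are represented by pairs of
  integers in {0..<2^e}.\<close>

definition cat_map :: "int \<Rightarrow> int \<Rightarrow> nat \<Rightarrow> int \<times> int \<Rightarrow> int \<times> int" where
  "cat_map p q e v = ((fst v + p * snd v) mod 2 ^ e,
                      (q * fst v + (1 + p * q) * snd v) mod 2 ^ e)"

definition cat_points :: "nat \<Rightarrow> (int \<times> int) set" where
  "cat_points e = {0..<2 ^ e} \<times> {0..<2 ^ e}"

definition is_cycle_length :: "int \<Rightarrow> int \<Rightarrow> nat \<Rightarrow> nat \<Rightarrow> bool" where
  "is_cycle_length p q e n \<longleftrightarrow>
     (\<exists>v \<in> cat_points e. 0 < n \<and> (cat_map p q e ^^ n) v = v \<and>
        (\<forall>m. 0 < m \<and> m < n \<longrightarrow> (cat_map p q e ^^ m) v \<noteq> v))"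

definition catA :: "int \<Rightarrow> int \<Rightarrow> real" where
  "catA p q = real_of_int (p * q + 2)"

definition catB :: "int \<Rightarrow> int \<Rightarrow> real" where
  "catB p q = sqrt ((catA p q)\<^sup>2 - 4)"

definition catH :: "int \<Rightarrow> int \<Rightarrow> nat \<Rightarrow> real" where
  "catH p q n = (1 / catB p q) *
     (((catA p q + catB p q) / 2) ^ n - ((catA p q - catB p q) / 2) ^ n)"

end

theory Submission
  imports Defs "HOL-Number_Theory.Cong"
begin

text \<open>By Cayley-Hamilton, \<open>C\<^sup>n = H\<^sub>n C - H\<^sub>n\<^sub>-\<^sub>1 I\<close>, where \<open>H\<^sub>n\<close> is the integer Lucas
  sequence \<open>U\<^sub>n(A, 1)\<close>. If \<open>H\<^sub>n\<close> were odd it would be invertible modulo \<open>2\<^sup>e\<close>, so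
  \<open>C\<^sup>n v = v\<close> would make \<open>v\<close> an eigenvector, \<open>C v = l v\<close>. For odd \<open>A\<close> the
  characteristic polynomial \<open>l\<^sup>2 - A l + 1\<close> is odd and kills \<open>v\<close>, so \<open>v = 0\<close>. For even
  \<open>A\<close>, \<open>H\<^sub>n\<close> odd forces \<open>n\<close> odd; then \<open>(l\<^sup>n - 1) v = 0\<close> and
  \<open>l\<^sup>n - 1 = (l - 1)(1 + l + \<dots> + l\<^sup>n\<^sup>-\<^sup>1)\<close> with an odd second factor, so \<open>l v = v\<close>.
  Either way \<open>v\<close> is a fixed point, contradicting a cycle length \<open>n > 1\<close>.\<close>

fun lucas_U :: "int \<Rightarrow> nat \<Rightarrow> int" where
  "lucas_U A 0 = 0"
| "lucas_U A (Suc 0) = 1"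
| "lucas_U A (Suc (Suc n)) = A * lucas_U A (Suc n) - lucas_U A n"

lemma lucas_U_binet:
  fixes a b :: "'a :: comm_ring_1"
  assumes "a + b = of_int A" and "a * b = 1"
  shows "(a - b) * of_int (lucas_U A n) = a ^ n - b ^ n"
proof (induction n rule: induct_nat_012)
  case (ge2 n)
  have "a ^ Suc (Suc n) - b ^ Suc (Suc n) = (a + b) * (a ^ Suc n - b ^ Suc n) - a * b * (a ^ n - b ^ n)"
    by (simp add: algebra_simps)
  also have "\<dots> = of_int A * ((a - b) * of_int (lucas_U A (Suc n))) - (a - b) * of_int (lucas_U A n)"
    by (simp add: assms ge2)
  finally show ?case by (simp add: algebra_simps)
qed simp_all

lemma even_lucas_U_iff:
  assumes "even A" shows "even (lucas_U A n) \<longleftrightarrow> even n"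
  using assms by (induction A n rule: lucas_U.induct) auto

lemma catH_eq_lucas_U:
  assumes "0 < p * q"
  shows "catH p q n = of_int (lucas_U (p * q + 2) n)"
proof -
  define A B where "A = catA p q" and "B = catB p q"
  have "A \<ge> 3" using assms unfolding A_def catA_def by linarith
  then have "A * A \<ge> 3 * 3" using mult_mono[of 3 A 3 A] by simp
  then have B: "B > 0" "B\<^sup>2 = A\<^sup>2 - 4"
    unfolding B_def catB_def A_def[symmetric] by (simp_all add: power2_eq_square)
  have "(A + B) / 2 + (A - B) / 2 = of_int (p * q + 2)"
    unfolding A_def catA_def by (simp add: field_simps)
  moreover have "(A + B) / 2 * ((A - B) / 2) = 1"
    using B(2) by (simp add: field_simps power2_eq_square)
  ultimately have "((A + B) / 2 - (A - B) / 2) * of_int (lucas_U (p * q + 2) n) =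
      ((A + B) / 2) ^ n - ((A - B) / 2) ^ n"
    by (rule lucas_U_binet)
  then show ?thesis unfolding catH_def A_def[symmetric] B_def[symmetric] using B(1)
    by (simp add: field_simps)
qed

lemma odd_geometric_sum:
  fixes l :: int assumes "odd n" shows "odd (\<Sum>i<n. l ^ i)"
proof -
  have "{i\<in>{..<n}. odd (l ^ i)} = (if odd l then {..<n} else {0})"
    using odd_pos[OF assms] by auto
  moreover have "even (\<Sum>i<n. l ^ i) \<longleftrightarrow> even (card {i\<in>{..<n}. odd (l ^ i)})"
    by (rule even_sum_iff) simp
  ultimately show ?thesis using assms by (cases "odd l") simp_all
qed

lemma odd_coprime_pow2:
  fixes k :: int assumes "odd k" shows "coprime k (2 ^ e)"
  using assms by (simp add: coprime_commute)

lemma cong_pow_odd_imp_cong: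
  fixes l x :: int
  assumes "odd n" and "[l ^ n * x = x] (mod 2 ^ e)"
  shows "[l * x = x] (mod 2 ^ e)"
proof -
  define S where "S = (\<Sum>i<n. l ^ i)"
  have "l ^ n * x - x = (l ^ n - 1) * x" by (simp add: algebra_simps)
  also have "\<dots> = S * ((l - 1) * x)" unfolding S_def power_diff_1_eq by (simp add: ac_simps)
  finally have "[S * ((l - 1) * x) = S * 0] (mod 2 ^ e)"
    using assms(2) by (simp add: cong_iff_dvd_diff)
  then have "[(l - 1) * x = 0] (mod 2 ^ e)"
    using cong_mult_lcancel odd_coprime_pow2 odd_geometric_sum[OF assms(1)] unfolding S_def by blast
  then show ?thesis by (simp add: cong_iff_dvd_diff algebra_simps)
qed

lemma cong_inverse_mult:
  fixes k u a b M :: "'a :: unique_euclidean_ring"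
  assumes "[k * u = 1] (mod M)" and "[k * a = b] (mod M)"
  shows "[a = u * b] (mod M)"
proof -
  have "[a = (k * u) * a] (mod M)" using cong_scalar_right[OF assms(1), of a] by (simp add: cong_sym)
  also have "(k * u) * a = u * (k * a)" by (simp add: ac_simps)
  also have "[\<dots> = u * b] (mod M)" using assms(2) by (rule cong_scalar_left)
  finally show ?thesis .
qed

lemma reduced_pair_eq_iff_cong:
  assumes "(x, y) \<in> cat_points e"
  shows "(a mod 2 ^ e, b mod 2 ^ e) = (x, y) \<longleftrightarrow> [a = x] (mod 2 ^ e) \<and> [b = y] (mod 2 ^ e)"
  using assms by (simp add: cat_points_def cong_def)

lemma cat_map_mod_args: "cat_map p q e (a mod 2 ^ e, b mod 2 ^ e) = cat_map p q e (a, b)"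
  by (auto simp: cat_map_def cong_def[symmetric] intro!: cong_add cong_scalar_left)

text \<open>The Cayley-Hamilton identity \<open>C\<^sup>m\<^sup>+\<^sup>1 = U\<^sub>m\<^sub>+\<^sub>1 C - U\<^sub>m I\<close>, from \<open>C\<^sup>2 = A C - I\<close> with
  \<open>A = tr C = p q + 2\<close> and \<open>det C = 1\<close>.\<close>

lemma cat_map_iterate:
  fixes p q :: int
  defines "U \<equiv> lucas_U (p * q + 2)"
  shows "(cat_map p q e ^^ Suc m) (x, y) =
    ((U (Suc m) * (x + p * y) - U m * x) mod 2 ^ e,
     (U (Suc m) * (q * x + (1 + p * q) * y) - U m * y) mod 2 ^ e)"
proof (induction m)
  case 0
  then show ?case by (simp add: U_def cat_map_def)
next
  case (Suc m)
  then show ?case by (simp add: cat_map_mod_args) (simp add: U_def cat_map_def algebra_simps)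
qed

lemma cat_map_iterate_eigenvector:
  assumes "(x, y) \<in> cat_points e"
    and "[x + p * y = l * x] (mod 2 ^ e)" and "[q * x + (1 + p * q) * y = l * y] (mod 2 ^ e)"
  shows "(cat_map p q e ^^ m) (x, y) = ((l ^ m * x) mod 2 ^ e, (l ^ m * y) mod 2 ^ e)"
proof (induction m)
  case 0
  then show ?case using assms(1) by (simp add: cat_points_def)
next
  case (Suc m)
  have "[l ^ m * (x + p * y) = l ^ Suc m * x] (mod 2 ^ e)"
    using cong_scalar_left[OF assms(2), of "l ^ m"] by (simp add: ac_simps)
  moreover have "[l ^ m * (q * x + (1 + p * q) * y) = l ^ Suc m * y] (mod 2 ^ e)"
    using cong_scalar_left[OF assms(3), of "l ^ m"] by (simp add: ac_simps)
  ultimately show ?case using Suc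
    by (simp add: cat_map_mod_args) (simp add: cat_map_def cong_def algebra_simps)
qed

lemma cat_period_eigenvector:
  fixes p q :: int
  assumes "(x, y) \<in> cat_points e" and "(cat_map p q e ^^ n) (x, y) = (x, y)"
    and "odd (lucas_U (p * q + 2) n)"
  obtains l where "[x + p * y = l * x] (mod 2 ^ e)" and "[q * x + (1 + p * q) * y = l * y] (mod 2 ^ e)"
proof -
  define U where "U = lucas_U (p * q + 2)"
  obtain m where n: "n = Suc m" using assms(3) by (cases n) simp_all
  have "((U n * (x + p * y) - U m * x) mod 2 ^ e,
         (U n * (q * x + (1 + p * q) * y) - U m * y) mod 2 ^ e) = (x, y)"
    using assms(2) unfolding n U_def cat_map_iterate .
  then have "[U n * (x + p * y) = (1 + U m) * x] (mod 2 ^ e)"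
    and "[U n * (q * x + (1 + p * q) * y) = (1 + U m) * y] (mod 2 ^ e)"
    unfolding reduced_pair_eq_iff_cong[OF assms(1)] by (simp_all add: cong_iff_dvd_diff algebra_simps)
  moreover obtain u where "[U n * u = 1] (mod 2 ^ e)"
    using cong_solve_coprime_int odd_coprime_pow2 assms(3) unfolding U_def by blast
  ultimately show ?thesis
    using that[of "u * (1 + U m)"] cong_inverse_mult by (metis mult.assoc mult.commute)
qed

lemma odd_trace_eigenvector_cong_0:
  fixes p q :: int
  assumes "odd (p * q)"
    and "[x + p * y = l * x] (mod 2 ^ e)" and "[q * x + (1 + p * q) * y = l * y] (mod 2 ^ e)"
  shows "[x = 0] (mod 2 ^ e)" and "[y = 0] (mod 2 ^ e)"
proof -
  define A c1 c2 where "A = p * q + 2" and "c1 = x + p * y" and "c2 = q * x + (1 + p * q) * y"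
  txt \<open>\<open>Q\<close> is the characteristic polynomial of \<open>C\<close> at the eigenvalue \<open>l\<close>.\<close>
  define Q where "Q = l\<^sup>2 - A * l + 1"
  have "odd Q"
    unfolding Q_def using assms(1) by (cases "even l") (simp_all add: A_def power2_eq_square)
  have d1: "2 ^ e dvd c1 - l * x" and d2: "2 ^ e dvd c2 - l * y"
    using assms(2,3) unfolding c1_def c2_def by (simp_all add: cong_iff_dvd_diff)
  have "Q * x = A * (c1 - l * x) - (c1 - l * x) - p * (c2 - l * y) - l * (c1 - l * x)"
    and "Q * y = A * (c2 - l * y) - q * (c1 - l * x) - (1 + p * q) * (c2 - l * y) - l * (c2 - l * y)"
    unfolding Q_def A_def c1_def c2_def by (simp_all add: algebra_simps power2_eq_square)
  then have "[Q * x = Q * 0] (mod 2 ^ e)" and "[Q * y = Q * 0] (mod 2 ^ e)"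
    using d1 d2 by (simp_all add: cong_0_iff)
  then show "[x = 0] (mod 2 ^ e)" and "[y = 0] (mod 2 ^ e)"
    using cong_mult_lcancel odd_coprime_pow2[OF \<open>odd Q\<close>] by blast+
qed

lemma cat_map_fixed_if_odd_lucas:
  fixes p q :: int
  assumes v: "(x, y) \<in> cat_points e" and period: "(cat_map p q e ^^ n) (x, y) = (x, y)"
    and odd_U: "odd (lucas_U (p * q + 2) n)"
  shows "cat_map p q e (x, y) = (x, y)"
proof -
  obtain l where eig: "[x + p * y = l * x] (mod 2 ^ e)" "[q * x + (1 + p * q) * y = l * y] (mod 2 ^ e)"
    using cat_period_eigenvector[OF assms] .
  have "[l * x = x] (mod 2 ^ e) \<and> [l * y = y] (mod 2 ^ e)"
  proof (cases "odd (p * q)")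
    case True
    then have "x = 0 \<and> y = 0"
      using odd_trace_eigenvector_cong_0[OF True eig] v by (simp add: cat_points_def cong_def)
    then show ?thesis by simp
  next
    case False
    then have "odd n" using odd_U even_lucas_U_iff[of "p * q + 2" n] by simp
    moreover have "[l ^ n * x = x] (mod 2 ^ e)" and "[l ^ n * y = y] (mod 2 ^ e)"
      using period unfolding cat_map_iterate_eigenvector[OF v eig] reduced_pair_eq_iff_cong[OF v]
      by simp_all
    ultimately show ?thesis using cong_pow_odd_imp_cong by blast
  qed
  then show ?thesis
    using eig cong_trans unfolding cat_map_def reduced_pair_eq_iff_cong[OF v] by auto
qed

theorem proposition5:
  fixes p q :: int and e n :: nat
  assumes "p > 0" and "q > 0" and "e > 0"
    and "n > 1" and "is_cycle_length p q e n"
  shows "\<exists>k::int. catH p q n = 2 * real_of_int k"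
proof -
  obtain x y where v: "(x, y) \<in> cat_points e" and period: "(cat_map p q e ^^ n) (x, y) = (x, y)"
    and minimal: "\<forall>m. 0 < m \<and> m < n \<longrightarrow> (cat_map p q e ^^ m) (x, y) \<noteq> (x, y)"
    using assms(5) unfolding is_cycle_length_def by auto
  have "cat_map p q e (x, y) \<noteq> (x, y)" using minimal[rule_format, of 1] assms(4) by simp
  then have "even (lucas_U (p * q + 2) n)" using cat_map_fixed_if_odd_lucas v period by blast
  then obtain k where "lucas_U (p * q + 2) n = 2 * k" by (rule evenE)
  then show ?thesis using catH_eq_lucas_U[of p q n] assms(1,2) by auto
qed

end
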